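(* Let $V$ be a finite dimensional real vector space, let $G$ be an abelian subgroup of $GL(V)$ and let $x\in V$ be a point with a somewhere dense $G$-orbit, i.e. the closure of $G(x)=\{gx: g\in G\}$ contains a non-empty open subset of $V$. Then the isotropy group $G_y=\{g\in G: gy=y\}$ is trivial for every point $y\in G(x)$. *)

theory Defs
  imports "HOL-Analysis.Analysis"
begin

definition GL :: "('a::real_vector \<Rightarrow> 'a) set" where
  "GL = {f. linear f \<and> bij f}"

definition subgroup_GL :: "('a::real_vector \<Rightarrow> 'a) set \<Rightarrow> bool" where
  "subgroup_GL G \<longleftrightarrow> G \<subseteq> GL \<and> id \<in> G \<and> (\<forall>f\<in>G. \<forall>g\<in>G. f \<circ> g \<in> G) \<and> (\<forall>f\<in>G. inv f \<in> G)"

definition abelian_subgroup_GL :: "('a::real_vector \<Rightarrow> 'a) set \<Rightarrow> bool" where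
  "abelian_subgroup_GL G \<longleftrightarrow> subgroup_GL G \<and> (\<forall>f\<in>G. \<forall>g\<in>G. f \<circ> g = g \<circ> f)"

definition orbit :: "('a \<Rightarrow> 'a) set \<Rightarrow> 'a \<Rightarrow> 'a set" where
  "orbit G x = (\<lambda>g. g x) ` G"

definition isotropy :: "('a \<Rightarrow> 'a) set \<Rightarrow> 'a \<Rightarrow> ('a \<Rightarrow> 'a) set" where
  "isotropy G y = {g \<in> G. g y = y}"

end

theory Submission
  imports Defs
begin

text \<open>If an element g of the abelian group G fixes some point y of an orbit, then, since every
  point of that orbit has the form k y with k \<in> G, it fixes k y = k (g y) = g (k y) too. So g fixes
  the orbit, hence its closure, hence a non-empty open set. Its fixed point set is a linear subspace,
  and the only subspace containing a non-empty open set is the whole space; thus g = id.\<close>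

lemma linear_eq_on_open:
  fixes f g :: "'a::real_normed_vector \<Rightarrow> 'b::real_vector"
  assumes "linear f" "linear g" "open U" "U \<noteq> {}" "\<And>z. z \<in> U \<Longrightarrow> f z = g z"
  shows "f = g"
proof -
  have "subspace {z. f z = g z}"
    using assms(1,2) by (auto simp: subspace_def linear_0 linear_add linear_scale)
  then have "affine hull U \<subseteq> {z. f z = g z}"
    using assms(5) by (intro hull_minimal) (auto intro: subspace_imp_affine)
  then show ?thesis
    using affine_hull_open[OF assms(3,4)] by auto
qed

lemma orbit_subset_orbit:
  assumes "subgroup_GL G" "y \<in> orbit G x"
  shows "orbit G x \<subseteq> orbit G y"
proof
  fix z assume "z \<in> orbit G x"
  then obtain k where k: "k \<in> G" "z = k x" by (auto simp: orbit_def)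
  obtain h where h: "h \<in> G" "y = h x" using assms(2) by (auto simp: orbit_def)
  have "bij h" using h(1) assms(1) by (auto simp: subgroup_GL_def GL_def)
  then have "z = (k \<circ> inv h) y" using k h by (simp add: bij_is_inj)
  moreover have "k \<circ> inv h \<in> G" using assms(1) k h by (simp add: subgroup_GL_def)
  ultimately show "z \<in> orbit G y" unfolding orbit_def by (metis image_eqI)
qed

lemma isotropy_fixes_orbit:
  assumes "abelian_subgroup_GL G" "g \<in> isotropy G y" "z \<in> orbit G y"
  shows "g z = z"
proof -
  obtain k where k: "k \<in> G" "z = k y" using assms(3) by (auto simp: orbit_def)
  have "g \<in> G" "g y = y" using assms(2) by (auto simp: isotropy_def)
  then have "g (k y) = k (g y)"
    using assms(1) k(1) by (metis abelian_subgroup_GL_def comp_apply)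
  then show ?thesis using k \<open>g y = y\<close> by simp
qed

lemma closed_fixpoints_linear:
  fixes g :: "'a::euclidean_space \<Rightarrow> 'a"
  assumes "linear g"
  shows "closed {z. g z = z}"
proof -
  have "continuous_on UNIV g" using assms by (simp add: linear_continuous_on linear_conv_bounded_linear)
  then show ?thesis by (intro closed_Collect_eq) (auto intro: continuous_intros)
qed

theorem mainTheorem8:
  fixes G :: "('a::euclidean_space \<Rightarrow> 'a) set" and x :: 'a
  assumes "abelian_subgroup_GL G"
    and "\<exists>U. open U \<and> U \<noteq> {} \<and> U \<subseteq> closure (orbit G x)"
  shows "\<forall>y\<in>orbit G x. isotropy G y = {id}"
proof (intro ballI set_eqI iffI)
  fix y g assume y: "y \<in> orbit G x" and g: "g \<in> isotropy G y"
  have group: "subgroup_GL G" using assms(1) by (simp add: abelian_subgroup_GL_def)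
  have "linear g" using g group by (auto simp: isotropy_def subgroup_GL_def GL_def)
  have "orbit G x \<subseteq> {z. g z = z}"
    using orbit_subset_orbit[OF group y] isotropy_fixes_orbit[OF assms(1) g] by blast
  then have "closure (orbit G x) \<subseteq> {z. g z = z}"
    using closed_fixpoints_linear[OF \<open>linear g\<close>] by (rule closure_minimal)
  moreover obtain U where "open U" "U \<noteq> {}" "U \<subseteq> closure (orbit G x)" using assms(2) by blast
  ultimately have "g = id"
    using linear_eq_on_open[OF \<open>linear g\<close> linear_id] by (auto simp: subset_iff)
  then show "g \<in> {id}" by simp
next
  fix y and g :: "'a \<Rightarrow> 'a" assume "g \<in> {id}"
  then show "g \<in> isotropy G y" using assms(1)
    by (simp add: isotropy_def abelian_subgroup_GL_def subgroup_GL_def)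
qed

end
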